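(* Let $V$ be a real Hilbert space with inner product $\langle\cdot,\cdot\rangle$, $Z=V\times\mathbb{R}\times\mathbb{R}$ with the product inner product, $D$ a linear operator on $V$, and $L$ a linear, self-adjoint, positive semidefinite operator on $V$. Let $E_{\mathrm{L}},E_{\mathrm{U}}$ be lower-bounded $C^1$ functionals on $V$ and $a_{\mathrm{X}}>-\inf_v E_{\mathrm{X}}(v)$ real constants ($\mathrm{X}=\mathrm{L},\mathrm{U}$). For $u\in V$ let $\phi_{\mathrm{X}}(u)=\nabla E_{\mathrm{X}}(u)/\big(2\sqrt{E_{\mathrm{X}}(u)+a_{\mathrm{X}}}\big)\in V$ (Fréchet derivative identified with an element of $V$), $\Phi_{\mathrm{X}}(u)(v)=\langle\phi_{\mathrm{X}}(u),v\rangle$, $\Phi_{\mathrm{X}}^*(u)(r)=r\phi_{\mathrm{X}}(u)$, and \[ \mathcal{L}(u)=\begin{bmatrix} I & 0 & 0\\ \Phi_{\mathrm{L}}(u) & 1 & 0\\ \Phi_{\mathrm{U}}(u) & 0 & 1\end{bmatrix} \begin{bmatrix} D & 0 & 0\\ 0&0&0\\0&0&0\end{bmatrix} \begin{bmatrix} I & \Phi_{\mathrm{L}}^*(u) & \Phi_{\mathrm{U}}^*(u)\\ 0&1&0\\0&0&1\end{bmatrix}. \] Define $\tilde E(u,r_{\mathrm{L}},r_{\mathrm{U}})=\frac12\langle u,Lu\rangle + r_{\mathrm{L}}^2-r_{\mathrm{U}}^2$, so $\nabla\tilde E(u,r_{\mathrm{L}},r_{\mathrm{U}})=[Lu,\,2r_{\mathrm{L}},\,-2r_{\mathrm{U}}]^T$.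 Let $\Delta t>0$, let $z^n=[u^n,r^n_{\mathrm{L}},r^n_{\mathrm{U}}]^T\in Z$, let $\bar u^{n+1/2}\in V$ be arbitrary, and suppose $z^{n+1}=[u^{n+1},r^{n+1}_{\mathrm{L}},r^{n+1}_{\mathrm{U}}]^T\in Z$ satisfies \[ \frac{z^{n+1}-z^n}{\Delta t}=\mathcal{L}(\bar u^{n+1/2})\,\nabla\tilde E(z^{n+1/2}),\qquad z^{n+1/2}=\tfrac12(z^{n+1}+z^n), \] with all terms well-defined. Let $\tilde E^k=\frac12\langle u^k,Lu^k\rangle+(r^k_{\mathrm{L}})^2-(r^k_{\mathrm{U}})^2$ for $k=n,n+1$. If $D$ is skew-symmetric, then $\tilde E^{n+1}=\tilde E^n$. If $D$ is negative semidefinite, then $\tilde E^{n+1}\le\tilde E^n$.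
   Context: $I$ is the identity on $V$. $D$ skew-symmetric means $\langle Dv,w\rangle=-\langle v,Dw\rangle$ on its domain; negative semidefinite means $\langle v,Dv\rangle\le0$. In the paper's Crank–Nicolson-type SAV scheme, $\bar u^{n+1/2}$ is chosen as a (locally) $O(\Delta t^2)$ approximation of the midpoint value, but the conclusion holds for any choice. *)

theory Defs
  imports "HOL-Analysis.Analysis"
begin

definition phi_X :: "('a::real_inner \<Rightarrow> real) \<Rightarrow> ('a \<Rightarrow> 'a) \<Rightarrow> real \<Rightarrow> 'a \<Rightarrow> 'a" where
  "phi_X E gradE a u = (1 / (2 * sqrt (E u + a))) *\<^sub>R gradE u"

definition left_op :: "'a::real_inner \<Rightarrow> 'a \<Rightarrow> 'a \<times> real \<times> real \<Rightarrow> 'a \<times> real \<times> real" where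
  "left_op pL pU z = (case z of (v, a, b) \<Rightarrow> (v, pL \<bullet> v + a, pU \<bullet> v + b))"

definition mid_op :: "('a::real_vector \<Rightarrow> 'a) \<Rightarrow> 'a \<times> real \<times> real \<Rightarrow> 'a \<times> real \<times> real" where
  "mid_op D z = (case z of (v, a, b) \<Rightarrow> (D v, 0, 0))"

definition right_op :: "'a::real_vector \<Rightarrow> 'a \<Rightarrow> 'a \<times> real \<times> real \<Rightarrow> 'a \<times> real \<times> real" where
  "right_op pL pU z = (case z of (v, a, b) \<Rightarrow> (v + a *\<^sub>R pL + b *\<^sub>R pU, a, b))"

definition calL :: "('a::real_inner \<Rightarrow> 'a) \<Rightarrow> 'a \<Rightarrow> 'a \<Rightarrow> 'a \<times> real \<times> real \<Rightarrow> 'a \<times> real \<times> real" where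
  "calL D pL pU = left_op pL pU \<circ> mid_op D \<circ> right_op pL pU"

definition Etilde :: "('a::real_inner \<Rightarrow> 'a) \<Rightarrow> 'a \<times> real \<times> real \<Rightarrow> real" where
  "Etilde L z = (case z of (u, rL, rU) \<Rightarrow> (1/2) * (u \<bullet> L u) + rL\<^sup>2 - rU\<^sup>2)"

definition gradEtilde :: "('a::real_inner \<Rightarrow> 'a) \<Rightarrow> 'a \<times> real \<times> real \<Rightarrow> 'a \<times> real \<times> real" where
  "gradEtilde L z = (case z of (u, rL, rU) \<Rightarrow> (L u, 2 * rL, - 2 * rU))"

definition linear_op_on :: "'a::real_vector set \<Rightarrow> ('a \<Rightarrow> 'a) \<Rightarrow> bool" where
  "linear_op_on S D \<longleftrightarrow> subspace S \<and>
     (\<forall>x\<in>S. \<forall>y\<in>S. D (x + y) = D x + D y) \<and> (\<forall>c. \<forall>x\<in>S. D (c *\<^sub>R x) = c *\<^sub>R D x)"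

definition skew_symmetric_on :: "'a::real_inner set \<Rightarrow> ('a \<Rightarrow> 'a) \<Rightarrow> bool" where
  "skew_symmetric_on S D \<longleftrightarrow> (\<forall>v\<in>S. \<forall>w\<in>S. D v \<bullet> w = - (v \<bullet> D w))"

definition neg_semidef_on :: "'a::real_inner set \<Rightarrow> ('a \<Rightarrow> 'a) \<Rightarrow> bool" where
  "neg_semidef_on S D \<longleftrightarrow> (\<forall>v\<in>S. v \<bullet> D v \<le> 0)"

end

theory Submission
  imports Defs
begin

text \<open>
  The midpoint rule is a discrete gradient for the quadratic energy \<open>Etilde\<close>:
  \<open>Etilde z1 - Etilde z0 = (z1 - z0) \<bullet> g\<close> with \<open>g\<close> the gradient at the midpoint.
  The scheme sets \<open>z1 - z0 = dt \<cdot> calL g\<close>, and since the outer factors of \<open>calL\<close> are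
  adjoint to each other, \<open>g \<bullet> calL g = w \<bullet> D w\<close> with \<open>w\<close> the first component of the
  right factor applied to \<open>g\<close>. Hence the energy changes by \<open>dt \<cdot> (w \<bullet> D w)\<close>, which
  vanishes for skew-symmetric \<open>D\<close> and is nonpositive for negative semidefinite \<open>D\<close>.
\<close>

lemma inner_left_op: "z \<bullet> left_op pL pU y = right_op pL pU z \<bullet> y"
  by (cases z; cases y)
     (simp add: left_op_def right_op_def inner_add_left inner_add_right inner_commute algebra_simps)

lemma inner_mid_op: "z \<bullet> mid_op D z = fst z \<bullet> D (fst z)"
  by (cases z) (simp add: mid_op_def)

lemma inner_calL: "z \<bullet> calL D pL pU z = fst (right_op pL pU z) \<bullet> D (fst (right_op pL pU z))"
  by (simp add: calL_def inner_left_op inner_mid_op)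

lemma quadratic_form_diff_midpoint:
  assumes "linear L" and "\<forall>v w. L v \<bullet> w = v \<bullet> L w"
  shows "(1/2) * (x \<bullet> L x) - (1/2) * (y \<bullet> L y) = (x - y) \<bullet> L ((1/2) *\<^sub>R (x + y))"
proof -
  have "y \<bullet> L x = x \<bullet> L y"
    using assms(2) by (metis inner_commute)
  then show ?thesis
    using assms(1)
    by (simp add: linear_scale linear_add inner_diff_left inner_add_right algebra_simps)
qed

lemma Etilde_diff_midpoint:
  assumes "linear L" and "\<forall>v w. L v \<bullet> w = v \<bullet> L w"
  shows "Etilde L z1 - Etilde L z0 = (z1 - z0) \<bullet> gradEtilde L ((1/2) *\<^sub>R (z1 + z0))"
proof -
  obtain u0 a0 b0 where z0: "z0 = (u0, a0, b0)" by (cases z0)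
  obtain u1 a1 b1 where z1: "z1 = (u1, a1, b1)" by (cases z1)
  have "Etilde L z1 - Etilde L z0
      = ((1/2) * (u1 \<bullet> L u1) - (1/2) * (u0 \<bullet> L u0)) + (a1 - a0) * (a1 + a0) - (b1 - b0) * (b1 + b0)"
    by (simp add: z0 z1 Etilde_def power2_eq_square algebra_simps)
  also have "\<dots> = (u1 - u0) \<bullet> L ((1/2) *\<^sub>R (u1 + u0)) + (a1 - a0) * (a1 + a0) - (b1 - b0) * (b1 + b0)"
    by (simp only: quadratic_form_diff_midpoint[OF assms])
  also have "\<dots> = (z1 - z0) \<bullet> gradEtilde L ((1/2) *\<^sub>R (z1 + z0))"
    by (simp add: z0 z1 gradEtilde_def field_simps)
  finally show ?thesis .
qed

lemma skew_symmetric_on_inner_self: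
  assumes "skew_symmetric_on S D" and "v \<in> S"
  shows "v \<bullet> D v = 0"
  using assms unfolding skew_symmetric_on_def by (metis inner_commute neg_equal_zero)

theorem lemma3p1:
  fixes D L :: "'a::{real_inner, complete_space} \<Rightarrow> 'a"
    and domD :: "'a set"
    and EL EU :: "'a \<Rightarrow> real" and gradEL gradEU :: "'a \<Rightarrow> 'a"
    and aL aU dt :: real
    and z0 z1 :: "'a \<times> real \<times> real" and ubar :: 'a
  assumes D_lin: "linear_op_on domD D"
    and L_lin: "linear L"
    and L_selfadj: "\<forall>v w. L v \<bullet> w = v \<bullet> L w"
    and L_psd: "\<forall>v. 0 \<le> v \<bullet> L v"
    and EL_deriv: "\<forall>u. (EL has_derivative (\<lambda>h. gradEL u \<bullet> h)) (at u)"
    and EL_C1: "continuous_on UNIV gradEL"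
    and EL_bdd: "bdd_below (range EL)"
    and EU_deriv: "\<forall>u. (EU has_derivative (\<lambda>h. gradEU u \<bullet> h)) (at u)"
    and EU_C1: "continuous_on UNIV gradEU"
    and EU_bdd: "bdd_below (range EU)"
    and aL_gt: "aL > - Inf (range EL)"
    and aU_gt: "aU > - Inf (range EU)"
    and dt_pos: "dt > 0"
    and well_def: "fst (right_op (phi_X EL gradEL aL ubar) (phi_X EU gradEU aU ubar)
                          (gradEtilde L ((1/2) *\<^sub>R (z1 + z0)))) \<in> domD"
    and scheme: "(1 / dt) *\<^sub>R (z1 - z0) =
        calL D (phi_X EL gradEL aL ubar) (phi_X EU gradEU aU ubar)
             (gradEtilde L ((1/2) *\<^sub>R (z1 + z0)))"
  shows "(skew_symmetric_on domD D \<longrightarrow> Etilde L z1 = Etilde L z0) \<and>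
         (neg_semidef_on domD D \<longrightarrow> Etilde L z1 \<le> Etilde L z0)"
proof -
  define pL pU g where "pL = phi_X EL gradEL aL ubar" and "pU = phi_X EU gradEU aU ubar"
    and "g = gradEtilde L ((1/2) *\<^sub>R (z1 + z0))"
  define w where "w = fst (right_op pL pU g)"
  have "z1 - z0 = dt *\<^sub>R ((1 / dt) *\<^sub>R (z1 - z0))"
    using dt_pos by simp
  then have "Etilde L z1 - Etilde L z0 = dt * (g \<bullet> calL D pL pU g)"
    using Etilde_diff_midpoint[OF L_lin L_selfadj, of z1 z0] scheme
    by (simp add: pL_def pU_def g_def inner_commute)
  then have energy_change: "Etilde L z1 - Etilde L z0 = dt * (w \<bullet> D w)"
    by (simp add: inner_calL w_def)
  have "w \<in> domD"
    using well_def by (simp add: w_def pL_def pU_def g_def)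
  show ?thesis
  proof (intro conjI impI)
    assume "skew_symmetric_on domD D"
    with \<open>w \<in> domD\<close> show "Etilde L z1 = Etilde L z0"
      using energy_change by (simp add: skew_symmetric_on_inner_self)
  next
    assume "neg_semidef_on domD D"
    with \<open>w \<in> domD\<close> have "w \<bullet> D w \<le> 0"
      by (simp add: neg_semidef_on_def)
    then have "dt * (w \<bullet> D w) \<le> 0"
      using dt_pos by (simp add: mult_nonneg_nonpos)
    then show "Etilde L z1 \<le> Etilde L z0"
      using energy_change by simp
  qed
qed

end
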